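(* Let $\mathcal A,\mathcal B$ be finite alphabets, let $\sigma:\mathcal A^*\to\mathcal B^*$ be a non-erasing monoid morphism, and let $X\subseteq\mathcal A^{\mathbb Z}$ be a subshift. Write $\sigma=\alpha_\sigma\circ\pi_\sigma$ with $\pi_\sigma:\mathcal A^*\to\mathcal A_\sigma^*$ the subdivision morphism and $\alpha_\sigma:\mathcal A_\sigma^*\to\mathcal B^*$ the associated letter-to-letter morphism, and let $\alpha^X_\sigma:\pi_\sigma(X)\to\sigma(X)$ be the restriction/co-restriction of $\alpha_\sigma^{\mathbb Z}:\mathcal A_\sigma^{\mathbb Z}\to\mathcal B^{\mathbb Z}$. Then the following are equivalent: (1) $\sigma$ is recognizable in $X$; (2) $\alpha^X_\sigma$ is an isomorphism of subshifts (a shift-commuting homeomorphism); (3) $\alpha_\sigma$ is shift-orbit injective and shift-period preserving in $\pi_\sigma(X)$; (4) $\sigma$ is shift-orbit injective and shift-period preserving in $X$.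
   Context: A subshift $X\subseteq\mathcal A^{\mathbb Z}$ is a non-empty closed subset invariant under the shift $T$, $T(\mathbf x)_i=x_{i+1}$. A morphism $\sigma$ is non-erasing if $|\sigma(a)|\ge1$ for all letters $a$. For $\mathbf x=\ldots x_{-1}x_0x_1\ldots\in\mathcal A^{\mathbb Z}$, $\sigma^{\mathbb Z}(\mathbf x)$ is the biinfinite word whose positive half $\mathbf y_{[1,\infty)}$ is $\sigma(x_1)\sigma(x_2)\ldots$ and whose negative part is $\ldots\sigma(x_{-1})\sigma(x_0)$ (ending at index $0$). The image subshift $\sigma(X)$ is the smallest subshift containing $\sigma^{\mathbb Z}(X)$ (equivalently the union of the shift-orbits of the $\sigma^{\mathbb Z}(\mathbf x)$, $\mathbf x\in X$). Subdivision: $\mathcal A_\sigma=\{a(k): a\in\mathcal A,\ 1\le k\le|\sigma(a)|\}$, $\pi_\sigma(a)=a(1)a(2)\cdots a(|\sigma(a)|)$, and $\alpha_\sigma(a(k))$ is the $k$-th letter of $\sigma(a)$. $\sigma$ is recognizable in $X$ if: whenever $\mathbf x,\mathbf x'\in X$, $\mathbf y\in\mathcal B^{\mathbb Z}$ satisfy $\mathbf y=T^k(\sigma^{\mathbb Z}(\mathbf x))=T^\ell(\sigma^{\mathbb Z}(\mathbf x'))$ with $0\le k\le|\sigma(x_1)|-1$ and $0\le\ell\le|\sigma(x'_1)|-1$, then $\mathbf x=\mathbf x'$ and $k=\ell$. $\sigma$ is shift-orbit injective in $X$ if for $\mathbf x,\mathbf y\in X$, $\sigma^{\mathbb Z}(\mathbf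 x)$ and $\sigma^{\mathbb Z}(\mathbf y)$ lie in the same shift-orbit iff $\mathbf x,\mathbf y$ lie in the same shift-orbit. $\sigma$ is shift-period preserving in $X$ if for every periodic word $w^{\pm\infty}=\ldots www\ldots\in X$ ($w$ non-empty), $w$ is a proper power (i.e. $w=u^m$ with $m\ge2$) iff $\sigma(w)$ is a proper power. *)

theory Defs
  imports "HOL-Analysis.Analysis"
begin

definition shiftZ :: "int \<Rightarrow> (int \<Rightarrow> 'a) \<Rightarrow> (int \<Rightarrow> 'a)" where
  "shiftZ k x = (\<lambda>i. x (i + k))"

definition fullshift_top :: "(int \<Rightarrow> 'a) topology" where
  "fullshift_top = product_topology (\<lambda>_. discrete_topology UNIV) UNIV"

definition subshift :: "(int \<Rightarrow> 'a) set \<Rightarrow> bool" where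
  "subshift X \<longleftrightarrow> X \<noteq> {} \<and> closedin fullshift_top X \<and> shiftZ 1 ` X = X"

definition non_erasing :: "('a \<Rightarrow> 'b list) \<Rightarrow> bool" where
  "non_erasing \<sigma> \<longleftrightarrow> (\<forall>a. \<sigma> a \<noteq> [])"

definition cumlen :: "('a \<Rightarrow> 'b list) \<Rightarrow> (int \<Rightarrow> 'a) \<Rightarrow> int \<Rightarrow> int" where
  "cumlen \<sigma> x n = (if 0 \<le> n then (\<Sum>j\<in>{1..n}. int (length (\<sigma> (x j))))
                    else - (\<Sum>j\<in>{n+1..0}. int (length (\<sigma> (x j)))))"

text \<open>sigma^Z(x): sigma(x_n) occupies positions cumlen(n-1)+1 .. cumlen(n).\<close>
definition morphZ :: "('a \<Rightarrow> 'b list) \<Rightarrow> (int \<Rightarrow> 'a) \<Rightarrow> (int \<Rightarrow> 'b)" where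
  "morphZ \<sigma> x = (\<lambda>i. let n = (THE n. cumlen \<sigma> x (n - 1) < i \<and> i \<le> cumlen \<sigma> x n)
                     in \<sigma> (x n) ! nat (i - cumlen \<sigma> x (n - 1) - 1))"

definition image_subshift :: "('a \<Rightarrow> 'b list) \<Rightarrow> (int \<Rightarrow> 'a) set \<Rightarrow> (int \<Rightarrow> 'b) set" where
  "image_subshift \<sigma> X = \<Inter> {Y. subshift Y \<and> morphZ \<sigma> ` X \<subseteq> Y}"

text \<open>Subdivision: letter a(k) is encoded as the pair (a,k), 1 <= k <= |sigma a|.\<close>
definition subdiv :: "('a \<Rightarrow> 'b list) \<Rightarrow> 'a \<Rightarrow> ('a \<times> nat) list" where
  "subdiv \<sigma> a = map (\<lambda>k. (a, k)) [1..<Suc (length (\<sigma> a))]"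

text \<open>alpha_sigma as a letter-to-letter morphism (a(k) maps to the k-th letter of sigma a).\<close>
definition subdiv_letter :: "('a \<Rightarrow> 'b list) \<Rightarrow> ('a \<times> nat) \<Rightarrow> 'b list" where
  "subdiv_letter \<sigma> c = [\<sigma> (fst c) ! (snd c - 1)]"

definition same_orbit :: "(int \<Rightarrow> 'a) \<Rightarrow> (int \<Rightarrow> 'a) \<Rightarrow> bool" where
  "same_orbit x y \<longleftrightarrow> (\<exists>k. y = shiftZ k x)"

definition recognizable :: "('a \<Rightarrow> 'b list) \<Rightarrow> (int \<Rightarrow> 'a) set \<Rightarrow> bool" where
  "recognizable \<sigma> X \<longleftrightarrow>
     (\<forall>x\<in>X. \<forall>x'\<in>X. \<forall>k l y.
        0 \<le> k \<and> k \<le> int (length (\<sigma> (x 1))) - 1 \<and>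
        0 \<le> l \<and> l \<le> int (length (\<sigma> (x' 1))) - 1 \<and>
        y = shiftZ k (morphZ \<sigma> x) \<and> y = shiftZ l (morphZ \<sigma> x')
        \<longrightarrow> x = x' \<and> k = l)"

definition orbit_injective :: "('a \<Rightarrow> 'b list) \<Rightarrow> (int \<Rightarrow> 'a) set \<Rightarrow> bool" where
  "orbit_injective \<sigma> X \<longleftrightarrow>
     (\<forall>x\<in>X. \<forall>y\<in>X. same_orbit (morphZ \<sigma> x) (morphZ \<sigma> y) \<longleftrightarrow> same_orbit x y)"

definition periodicZ :: "'a list \<Rightarrow> (int \<Rightarrow> 'a)" where
  "periodicZ w = (\<lambda>i. w ! nat (i mod int (length w)))"

definition proper_power :: "'a list \<Rightarrow> bool" where
  "proper_power w \<longleftrightarrow> (\<exists>u m. 2 \<le> m \<and> w = concat (replicate m u))"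

definition period_preserving :: "('a \<Rightarrow> 'b list) \<Rightarrow> (int \<Rightarrow> 'a) set \<Rightarrow> bool" where
  "period_preserving \<sigma> X \<longleftrightarrow>
     (\<forall>w. w \<noteq> [] \<and> periodicZ w \<in> X \<longrightarrow>
        (proper_power w \<longleftrightarrow> proper_power (concat (map \<sigma> w))))"

definition subshift_iso :: "(int \<Rightarrow> 'a) set \<Rightarrow> (int \<Rightarrow> 'b) set \<Rightarrow> ((int \<Rightarrow> 'a) \<Rightarrow> (int \<Rightarrow> 'b)) \<Rightarrow> bool" where
  "subshift_iso X Y f \<longleftrightarrow>
     homeomorphic_map (subtopology fullshift_top X) (subtopology fullshift_top Y) f \<and>
     (\<forall>x\<in>X. f (shiftZ 1 x) = shiftZ 1 (f x))"

end

theory Submission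
  imports Defs
begin

(* Recognizability amounts to lifting shifts: if T^m sigma(x) = sigma(y) for x, y in X, then
   y = T^j x and m is the length of the image of the corresponding block of x. Lifting gives
   shift-orbit injectivity at once, and period preservation because a proper period of
   sigma(w)^Z lifts to a proper period of w^Z.

   Conversely, given T^m sigma(x) = sigma(y), orbit injectivity gives y = T^j x, so sigma(x) has
   period m - |sigma(x_1 ... x_j)|. If this period is non-zero, sigma(x) has a finite orbit, and
   orbit injectivity makes the orbit of x a closed, hence compact, countable subset of X. By Baire
   it has an isolated point; as the shifts act transitively on it, it is discrete and so finite:
   x is periodic, say x = T^-1 w^Z with w primitive. Period preservation makes sigma(w) primitive,
   so the period of sigma(x) is a multiple of |sigma(w)| and lifts to a multiple of |w|.

   For the subdivision, alpha_sigma is letter-to-letter, so its recognizability on pi_sigma(X) is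
   plain injectivity, which by compactness means that alpha_sigma^X is an isomorphism. Since the
   subdivision pi_sigma is injective and recognizable, alpha_sigma is injective on pi_sigma(X)
   exactly when sigma is recognizable in X. *)

section \<open>Shifts, periods and orbits\<close>

lemma shiftZ_apply [simp]: "shiftZ k x i = x (i + k)"
  by (simp add: shiftZ_def)

lemma shiftZ_0 [simp]: "shiftZ 0 x = x"
  by (simp add: shiftZ_def)

lemma shiftZ_shiftZ [simp]: "shiftZ a (shiftZ b x) = shiftZ (a + b) x"
  by (simp add: shiftZ_def ac_simps)

lemma shiftZ_eq_iff: "shiftZ k x = y \<longleftrightarrow> x = shiftZ (- k) y"
  by (metis add.right_inverse add.left_inverse shiftZ_0 shiftZ_shiftZ)

lemma shiftZ_inject [simp]: "shiftZ k x = shiftZ k y \<longleftrightarrow> x = y"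
  by (simp add: shiftZ_eq_iff)

lemma shiftZ_add_eq_shiftZ_iff [simp]: "shiftZ (p + k) x = shiftZ k x \<longleftrightarrow> shiftZ p x = x"
  by (metis add.commute shiftZ_inject shiftZ_shiftZ)

lemma shiftZ_period_uminus [simp]: "shiftZ (- p) x = x \<longleftrightarrow> shiftZ p x = x"
  by (metis shiftZ_eq_iff)

lemma shiftZ_period_abs [simp]: "shiftZ \<bar>p\<bar> x = x \<longleftrightarrow> shiftZ p x = x"
  by (cases "0 \<le> p") simp_all

lemma shiftZ_period_mult:
  assumes "shiftZ p x = x"
  shows "shiftZ (k * p) x = x"
proof (induction k rule: int_induct[where k = 0])
  case (step1 i)
  then show ?case
    using assms by (metis distrib_right mult_1 shiftZ_shiftZ)
next
  case (step2 i)
  then show ?case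
    using assms by (metis diff_add_cancel left_diff_distrib' mult_1 shiftZ_shiftZ)
qed simp

lemma shiftZ_period_gcd:
  assumes "shiftZ p x = x" "shiftZ q x = x"
  shows "shiftZ (gcd p q) x = x"
proof -
  obtain u v where "u * p + v * q = gcd p q"
    using bezout_int by blast
  then show ?thesis
    using shiftZ_period_mult[OF assms(1), of u] shiftZ_period_mult[OF assms(2), of v]
    by (metis shiftZ_shiftZ)
qed

lemma shiftZ_period_mod:
  assumes "shiftZ p x = x"
  shows "shiftZ (k mod p) x = shiftZ k x"
  using shiftZ_period_mult[OF assms, of "k div p"]
  by (metis minus_div_mult_eq_mod shiftZ_shiftZ diff_add_cancel)

lemma periodic_eqI:
  assumes "0 < L" "shiftZ L f = f" "shiftZ L g = g" "\<And>i. 0 \<le> i \<Longrightarrow> i < L \<Longrightarrow> f i = g i"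
  shows "f = g"
proof
  fix i
  have "f i = f (i mod L)" "g i = g (i mod L)"
    using fun_cong[OF shiftZ_period_mod[OF assms(2), of i], of 0]
      fun_cong[OF shiftZ_period_mod[OF assms(3), of i], of 0] by simp_all
  then show "f i = g i"
    using assms(1,4) by simp
qed

definition shift_orbit :: "(int \<Rightarrow> 'a) \<Rightarrow> (int \<Rightarrow> 'a) set" where
  "shift_orbit x = range (\<lambda>k. shiftZ k x)"

lemma same_orbit_iff_in_shift_orbit: "same_orbit x y \<longleftrightarrow> y \<in> shift_orbit x"
  by (auto simp: same_orbit_def shift_orbit_def)

lemma in_shift_orbit_self: "x \<in> shift_orbit x"
  unfolding shift_orbit_def by (metis rangeI shiftZ_0)

lemma shiftZ_in_shift_orbit: "y \<in> shift_orbit x \<Longrightarrow> shiftZ k y \<in> shift_orbit x"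
  by (auto simp: shift_orbit_def)

lemma finite_shift_orbit_iff: "finite (shift_orbit x) \<longleftrightarrow> (\<exists>p>0. shiftZ p x = x)"
proof
  assume "finite (shift_orbit x)"
  then have "\<not> inj (\<lambda>k. shiftZ k x)"
    unfolding shift_orbit_def using finite_imageD infinite_UNIV_int by blast
  then obtain a b where "a < b" "shiftZ a x = shiftZ b x"
    by (metis injI linorder_neqE)
  then have "shiftZ (b - a) x = x"
    by (metis diff_add_cancel shiftZ_add_eq_shiftZ_iff)
  then show "\<exists>p>0. shiftZ p x = x"
    using \<open>a < b\<close> by (intro exI[of _ "b - a"]) simp
next
  assume "\<exists>p>0. shiftZ p x = x"
  then obtain p where "0 < p" "shiftZ p x = x"
    by blast
  then have "shiftZ k x \<in> (\<lambda>k. shiftZ k x) ` {0..<p}" for k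
    using shiftZ_period_mod[of p x k] by (metis atLeastLessThan_iff image_eqI pos_mod_bound pos_mod_sign)
  then have "shift_orbit x \<subseteq> (\<lambda>k. shiftZ k x) ` {0..<p}"
    unfolding shift_orbit_def by blast
  then show "finite (shift_orbit x)"
    using finite_subset by blast
qed

section \<open>Block structure of \<open>\<sigma>\<^sup>\<int>(x)\<close>\<close>

lemma int_fun_eqI_differences:
  fixes f g :: "int \<Rightarrow> int"
  assumes "f 0 = g 0" "\<And>n. f n - f (n - 1) = g n - g (n - 1)"
  shows "f n = g n"
proof (induction n rule: int_induct[where k = 0])
  case (step1 i)
  then show ?case using assms(2)[of "i + 1"] by simp
next
  case (step2 i)
  then show ?case using assms(2)[of i] by simp
qed (use assms(1) in simp)

lemma cumlen_0 [simp]: "cumlen \<tau> x 0 = 0"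
  by (simp add: cumlen_def)

lemma cumlen_step: "cumlen \<tau> x n = cumlen \<tau> x (n - 1) + int (length (\<tau> (x n)))"
proof -
  consider "1 \<le> n" | "n = 0" | "n < 0"
    by linarith
  then show ?thesis
  proof cases
    case 1
    then have "{1..n} = insert n {1..n - 1}"
      by auto
    then show ?thesis
      using 1 by (simp add: cumlen_def)
  next
    case 3
    then have "{n..0} = insert n {n + 1..0}"
      by auto
    then show ?thesis
      using 3 by (simp add: cumlen_def)
  qed (simp add: cumlen_def)
qed

lemma cumlen_shiftZ: "cumlen \<tau> (shiftZ j x) n = cumlen \<tau> x (n + j) - cumlen \<tau> x j"
proof (rule int_fun_eqI_differences[where g = "\<lambda>n. cumlen \<tau> x (n + j) - cumlen \<tau> x j"])
  fix n
  show "cumlen \<tau> (shiftZ j x) n - cumlen \<tau> (shiftZ j x) (n - 1)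
    = (cumlen \<tau> x (n + j) - cumlen \<tau> x j) - (cumlen \<tau> x (n - 1 + j) - cumlen \<tau> x j)"
    using cumlen_step[of \<tau> "shiftZ j x" n] cumlen_step[of \<tau> x "n + j"] by (simp add: algebra_simps)
qed simp

lemma cumlen_mult_period:
  assumes "shiftZ q x = x"
  shows "cumlen \<tau> x (t * q) = t * cumlen \<tau> x q"
proof (rule int_fun_eqI_differences[where f = "\<lambda>t. cumlen \<tau> x (t * q)"])
  fix t
  have "cumlen \<tau> x (t * q) = cumlen \<tau> x ((t - 1) * q + q)"
    by (simp add: algebra_simps)
  also have "\<dots> = cumlen \<tau> x ((t - 1) * q) + cumlen \<tau> x q"
    using cumlen_shiftZ[of \<tau> q x "(t - 1) * q"] assms by simp
  finally show "cumlen \<tau> x (t * q) - cumlen \<tau> x ((t - 1) * q) = t * cumlen \<tau> x q - (t - 1) * cumlen \<tau> x q"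
    by (simp add: algebra_simps)
qed simp

lemma cumlen_prefix:
  assumes "\<And>i. i < length w \<Longrightarrow> x (int i + 1) = w ! i"
  shows "cumlen \<tau> x (int (length w)) = int (length (concat (map \<tau> w)))"
  using assms
proof (induction w rule: rev_induct)
  case (snoc a w)
  have "x (int i + 1) = w ! i" if "i < length w" for i
    using snoc.prems[of i] that by (simp add: nth_append)
  moreover have "x (int (length w) + 1) = a"
    using snoc.prems[of "length w"] by simp
  ultimately show ?case
    using snoc.IH cumlen_step[of \<tau> x "int (length w) + 1"] by (simp add: add.commute)
qed simp

lemma cumlen_local:
  assumes "\<And>j. \<bar>j\<bar> \<le> \<bar>n\<bar> + 1 \<Longrightarrow> x j = y j"
  shows "cumlen \<tau> x n = cumlen \<tau> y n"
  unfolding cumlen_def using assms by (auto intro!: sum.cong)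

context
  fixes \<tau> :: "'a \<Rightarrow> 'b list"
  assumes non_erasing: "non_erasing \<tau>"
begin

lemma length_pos: "0 < length (\<tau> a)"
  using non_erasing by (simp add: non_erasing_def)

lemma cumlen_diff_ge: "m \<le> n \<Longrightarrow> n - m \<le> cumlen \<tau> x n - cumlen \<tau> x m"
proof (induction n rule: int_ge_induct)
  case (step i)
  have "0 < int (length (\<tau> (x (i + 1))))"
    using length_pos by simp
  moreover have "cumlen \<tau> x (i + 1) = cumlen \<tau> x i + int (length (\<tau> (x (i + 1))))"
    using cumlen_step[of \<tau> x "i + 1"] by simp
  ultimately show ?case
    using step by linarith
qed simp

lemma cumlen_less_iff [simp]: "cumlen \<tau> x m < cumlen \<tau> x n \<longleftrightarrow> m < n"
  by (smt (verit, best) cumlen_diff_ge)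

lemma cumlen_decomposition:
  "\<exists>j k. 0 \<le> k \<and> k < int (length (\<tau> (x (j + 1)))) \<and> i = cumlen \<tau> x j + k"
proof (induction i rule: int_induct[where k = 0])
  case base
  show ?case
    using length_pos by (intro exI[of _ 0]) auto
next
  case (step1 i)
  then obtain j k where jk: "0 \<le> k" "k < int (length (\<tau> (x (j + 1))))" "i = cumlen \<tau> x j + k"
    by blast
  show ?case
  proof (cases "k + 1 < int (length (\<tau> (x (j + 1))))")
    case True
    then show ?thesis
      using jk by (intro exI[of _ j] exI[of _ "k + 1"]) simp
  next
    case False
    then show ?thesis
      using jk cumlen_step[of \<tau> x "j + 1"] length_pos
      by (intro exI[of _ "j + 1"] exI[of _ 0]) simp
  qed
next
  case (step2 i)
  then obtain j k where jk: "0 \<le> k" "k < int (length (\<tau> (x (j + 1))))" "i = cumlen \<tau> x j + k"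
    by blast
  show ?case
  proof (cases "0 < k")
    case True
    then show ?thesis
      using jk by (intro exI[of _ j] exI[of _ "k - 1"]) simp
  next
    case False
    then show ?thesis
      using jk cumlen_step[of \<tau> x j] length_pos[of "x j"]
      by (intro exI[of _ "j - 1"] exI[of _ "int (length (\<tau> (x j))) - 1"]) simp
  qed
qed

lemma cumlen_decomposition_unique:
  assumes "cumlen \<tau> x j + k = cumlen \<tau> x j' + k'"
    and "0 \<le> k" "k < int (length (\<tau> (x (j + 1))))"
    and "0 \<le> k'" "k' < int (length (\<tau> (x (j' + 1))))"
  shows "j = j'"
proof -
  have "cumlen \<tau> x j < cumlen \<tau> x (j' + 1)" "cumlen \<tau> x j' < cumlen \<tau> x (j + 1)"
    using assms cumlen_step[of \<tau> x "j + 1"] cumlen_step[of \<tau> x "j' + 1"] by simp_all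
  then show ?thesis
    by simp
qed

lemma morphZ_decomposition:
  assumes "0 \<le> k" "k < int (length (\<tau> (x (j + 1))))"
  shows "morphZ \<tau> x (cumlen \<tau> x j + k + 1) = \<tau> (x (j + 1)) ! nat k"
proof -
  let ?i = "cumlen \<tau> x j + k + 1"
  have "(THE n. cumlen \<tau> x (n - 1) < ?i \<and> ?i \<le> cumlen \<tau> x n) = j + 1"
  proof (rule the_equality)
    show "cumlen \<tau> x (j + 1 - 1) < ?i \<and> ?i \<le> cumlen \<tau> x (j + 1)"
      using assms cumlen_step[of \<tau> x "j + 1"] by simp
  next
    fix n
    assume n: "cumlen \<tau> x (n - 1) < ?i \<and> ?i \<le> cumlen \<tau> x n"
    have "n - 1 = j"
      by (rule cumlen_decomposition_unique[of x "n - 1" "?i - 1 - cumlen \<tau> x (n - 1)" j k])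
        (use assms n cumlen_step[of \<tau> x n] in simp_all)
    then show "n = j + 1"
      by simp
  qed
  then show ?thesis
    by (simp add: morphZ_def)
qed

lemma morphZ_shiftZ: "morphZ \<tau> (shiftZ j x) = shiftZ (cumlen \<tau> x j) (morphZ \<tau> x)"
proof
  fix i
  obtain m k where mk: "0 \<le> k" "k < int (length (\<tau> (shiftZ j x (m + 1))))"
    "i - 1 = cumlen \<tau> (shiftZ j x) m + k"
    using cumlen_decomposition by blast
  then have "morphZ \<tau> (shiftZ j x) i = \<tau> (x (m + j + 1)) ! nat k"
    using morphZ_decomposition[of k "shiftZ j x" m] by (simp add: algebra_simps)
  moreover have "i + cumlen \<tau> x j = cumlen \<tau> x (m + j) + k + 1"
    using mk(3) by (simp add: cumlen_shiftZ)
  ultimately show "morphZ \<tau> (shiftZ j x) i = shiftZ (cumlen \<tau> x j) (morphZ \<tau> x) i"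
    using mk morphZ_decomposition[of k x "m + j"] by (simp add: algebra_simps)
qed

lemma morphZ_local:
  assumes "\<And>l. \<bar>l\<bar> \<le> \<bar>i\<bar> + 2 \<Longrightarrow> x l = y l"
  shows "morphZ \<tau> x i = morphZ \<tau> y i"
proof -
  obtain j k where jk: "0 \<le> k" "k < int (length (\<tau> (x (j + 1))))" "i - 1 = cumlen \<tau> x j + k"
    using cumlen_decomposition by blast
  have "\<bar>j\<bar> \<le> \<bar>i\<bar> + 1"
  proof (cases "0 \<le> j")
    case True
    then show ?thesis
      using cumlen_diff_ge[of 0 j x] jk by simp
  next
    case False
    then show ?thesis
      using cumlen_diff_ge[of "j + 1" 0 x] cumlen_step[of \<tau> x "j + 1"] jk by simp
  qed
  then have "cumlen \<tau> x j = cumlen \<tau> y j" "x (j + 1) = y (j + 1)"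
    using assms by (auto intro!: cumlen_local)
  then show ?thesis
    using jk morphZ_decomposition[of k x j] morphZ_decomposition[of k y j]
    by (metis diff_add_cancel)
qed

lemma morphZ_prefix:
  assumes "\<And>i. i < length w \<Longrightarrow> x (int i + 1) = w ! i" "i < length (concat (map \<tau> w))"
  shows "morphZ \<tau> x (int i + 1) = concat (map \<tau> w) ! i"
  using assms
proof (induction w arbitrary: i rule: rev_induct)
  case (snoc a w)
  let ?W = "concat (map \<tau> w)"
  have prefix: "x (int i + 1) = w ! i" if "i < length w" for i
    using snoc.prems(1)[of i] that by (simp add: nth_append)
  have last: "x (int (length w) + 1) = a"
    using snoc.prems(1)[of "length w"] by simp
  show ?case
  proof (cases "i < length ?W")
    case True
    then show ?thesis
      using snoc.IH[OF prefix] by (simp add: nth_append)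
  next
    case False
    define k where "k = int i - int (length ?W)"
    have "0 \<le> k" "k < int (length (\<tau> (x (int (length w) + 1))))"
      using False snoc.prems(2) last by (simp_all add: k_def)
    moreover have "cumlen \<tau> x (int (length w)) = int (length ?W)"
      using prefix by (rule cumlen_prefix)
    then have "int i + 1 = cumlen \<tau> x (int (length w)) + k + 1"
      by (simp add: k_def)
    ultimately show ?thesis
      using False morphZ_decomposition[of k x "int (length w)"] last
      by (simp add: nth_append k_def nat_diff_distrib)
  qed
qed simp

end

section \<open>Periodic words and proper powers\<close>

lemma periodicZ_nth: "i < length w \<Longrightarrow> periodicZ w (int i) = w ! i"
  by (simp add: periodicZ_def)

lemma periodicZ_period: "shiftZ (int (length w)) (periodicZ w) = periodicZ w"
  by (simp add: periodicZ_def fun_eq_iff)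

lemma periodicZ_eq_shiftZ_nth:
  assumes "periodicZ w = shiftZ 1 x" "i < length w"
  shows "x (int i + 1) = w ! i"
  using periodicZ_nth[OF assms(2)] by (simp add: assms(1) add.commute)

lemma periodicZ_eq_shiftZ_period:
  assumes "periodicZ w = shiftZ 1 x"
  shows "shiftZ (int (length w)) x = x"
  using periodicZ_period[of w] by (simp add: assms)

lemma cumlen_periodicZ:
  assumes "periodicZ w = shiftZ 1 x"
  shows "cumlen \<tau> x (int (length w)) = int (length (concat (map \<tau> w)))"
  using periodicZ_eq_shiftZ_nth[OF assms] by (rule cumlen_prefix)

lemma periodicZ_inject:
  assumes "length v = length w" "periodicZ v = periodicZ w"
  shows "v = w"
  using assms by (metis nth_equalityI periodicZ_nth)

lemma nth_concat_replicate:
  "i < m * length u \<Longrightarrow> concat (replicate m u) ! i = u ! (i mod length u)"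
proof (induction m arbitrary: i)
  case (Suc m)
  then show ?case
    by (cases "i < length u") (auto simp: nth_append mod_if)
qed simp

lemma length_concat_replicate [simp]: "length (concat (replicate m u)) = m * length u"
  by (induction m) auto

lemma periodicZ_concat_replicate:
  assumes "0 < m"
  shows "periodicZ (concat (replicate m u)) = periodicZ u"
proof (cases "u = []")
  case False
  show ?thesis
  proof
    fix i
    have "0 \<le> i mod int (m * length u)"
      using assms False by simp
    then have "nat (i mod int (m * length u)) mod length u
        = nat (i mod int (m * length u) mod int (length u))"
      by (simp add: nat_mod_distrib)
    also have "\<dots> = nat (i mod int (length u))"
      by (simp add: mod_mod_cancel)
    finally show "periodicZ (concat (replicate m u)) i = periodicZ u i"
      using assms False by (simp add: periodicZ_def nth_concat_replicate nat_less_iff)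
  qed
qed simp

lemma proper_power_if_divisor_period:
  assumes "0 < g" "g < length w" "g dvd length w"
    and "shiftZ (int g) (periodicZ w) = periodicZ w"
  shows "proper_power w"
proof -
  obtain m where m: "length w = m * g"
    using assms(3) by (metis dvd_def mult.commute)
  have "2 \<le> m"
  proof (rule ccontr)
    assume "\<not> 2 \<le> m"
    then have "m * g \<le> 1 * g"
      by (intro mult_le_mono1) simp
    then show False
      using m assms(2) by simp
  qed
  define u where "u = take g w"
  have "periodicZ u = periodicZ w"
  proof (rule periodic_eqI[of "int g"])
    show "shiftZ (int g) (periodicZ u) = periodicZ u"
      using periodicZ_period[of u] assms(2) by (simp add: u_def)
    show "periodicZ u i = periodicZ w i" if "0 \<le> i" "i < int g" for i
      using periodicZ_nth[of "nat i" u] periodicZ_nth[of "nat i" w] that assms(2)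
      by (simp add: u_def)
  qed (use assms(1,4) in simp_all)
  then have "w = concat (replicate m u)"
    using m \<open>2 \<le> m\<close> assms(2) periodicZ_concat_replicate[of m u]
    by (intro periodicZ_inject) (simp_all add: u_def)
  then show ?thesis
    using \<open>2 \<le> m\<close> by (auto simp: proper_power_def)
qed

lemma proper_power_iff_period:
  assumes "w \<noteq> []"
  shows "proper_power w \<longleftrightarrow>
    (\<exists>d>0. d < int (length w) \<and> shiftZ d (periodicZ w) = periodicZ w)"
proof
  assume "proper_power w"
  then obtain u m where um: "2 \<le> m" "w = concat (replicate m u)"
    by (auto simp: proper_power_def)
  then have "0 < length u" "length u < length w"
    using assms by auto
  moreover have "shiftZ (int (length u)) (periodicZ w) = periodicZ w"
    using um periodicZ_concat_replicate[of m u] periodicZ_period[of u] by simp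
  ultimately show "\<exists>d>0. d < int (length w) \<and> shiftZ d (periodicZ w) = periodicZ w"
    by (intro exI[of _ "int (length u)"]) simp
next
  assume "\<exists>d>0. d < int (length w) \<and> shiftZ d (periodicZ w) = periodicZ w"
  then obtain d where d: "0 < d" "d < int (length w)" "shiftZ d (periodicZ w) = periodicZ w"
    by blast
  define g where "g = nat (gcd d (int (length w)))"
  have "gcd d (int (length w)) \<le> d"
    using d(1) by (simp add: zdvd_imp_le)
  then have "gcd d (int (length w)) < int (length w)"
    using d(2) by linarith
  then have "0 < g" "g < length w"
    using d(1) by (simp_all add: g_def nat_less_iff)
  moreover have "int g dvd int (length w)"
    by (simp add: g_def)
  moreover have "shiftZ (int g) (periodicZ w) = periodicZ w"
    using shiftZ_period_gcd[OF d(3) periodicZ_period] by (simp add: g_def)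
  ultimately show "proper_power w"
    by (intro proper_power_if_divisor_period) (simp_all only: of_nat_dvd_iff)
qed

lemma primitive_word_period_dvd:
  assumes "w \<noteq> []" "\<not> proper_power w" "shiftZ p (periodicZ w) = periodicZ w"
  shows "int (length w) dvd p"
proof -
  define g where "g = gcd p (int (length w))"
  have "shiftZ g (periodicZ w) = periodicZ w"
    unfolding g_def using assms(3) periodicZ_period by (rule shiftZ_period_gcd)
  moreover have "0 < g" "g \<le> int (length w)"
    using assms(1) by (simp_all add: g_def zdvd_imp_le)
  ultimately have "g = int (length w)"
    using assms proper_power_iff_period by fastforce
  then show ?thesis
    by (metis g_def gcd_dvd1)
qed

lemma proper_power_concat_map: "proper_power w \<Longrightarrow> proper_power (concat (map \<tau> w))"
proof -
  have "concat (map \<tau> (concat (replicate m u))) = concat (replicate m (concat (map \<tau> u)))" for m u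
    by (induction m) auto
  then show "proper_power w \<Longrightarrow> proper_power (concat (map \<tau> w))"
    unfolding proper_power_def by metis
qed

lemma periodic_point_primitive_word:
  assumes "0 < p" "shiftZ p x = x"
  obtains w where "w \<noteq> []" "\<not> proper_power w" "periodicZ w = shiftZ 1 x"
proof -
  define n where "n = (LEAST n. 0 < n \<and> shiftZ (int n) x = x)"
  have "0 < n \<and> shiftZ (int n) x = x"
    unfolding n_def by (rule LeastI[of _ "nat p"]) (use assms in simp)
  then have n: "0 < n" "shiftZ (int n) x = x"
    by auto
  have minimal: "shiftZ (int d) x \<noteq> x" if "0 < d" "d < n" for d
    using not_less_Least[of d "\<lambda>n. 0 < n \<and> shiftZ (int n) x = x"] that by (simp add: n_def)
  define w where "w = map (\<lambda>i. x (int i + 1)) [0..<n]"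
  have "periodicZ w = shiftZ 1 x"
  proof (rule periodic_eqI[of "int n"])
    show "shiftZ (int n) (periodicZ w) = periodicZ w"
      using periodicZ_period[of w] by (simp add: w_def)
    show "periodicZ w i = shiftZ 1 x i" if "0 \<le> i" "i < int n" for i
      using that periodicZ_nth[of "nat i" w] by (simp add: w_def add.commute)
  qed (use n in simp_all)
  moreover have "w \<noteq> []"
    using n by (simp add: w_def)
  moreover have "\<not> proper_power w"
  proof
    assume "proper_power w"
    then obtain d where "0 < d" "d < int (length w)" "shiftZ d (periodicZ w) = periodicZ w"
      using proper_power_iff_period[OF \<open>w \<noteq> []\<close>] by blast
    then show False
      using minimal[of "nat d"] \<open>periodicZ w = shiftZ 1 x\<close> by (simp add: w_def)
  qed
  ultimately show ?thesis
    using that by blast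
qed

lemma concat_map_non_erasing_neq_Nil:
  "non_erasing \<tau> \<Longrightarrow> w \<noteq> [] \<Longrightarrow> concat (map \<tau> w) \<noteq> []"
  by (cases w) (auto simp: non_erasing_def)

lemma morphZ_periodicZ:
  assumes "non_erasing \<tau>" "w \<noteq> []" "periodicZ w = shiftZ 1 x"
  shows "periodicZ (concat (map \<tau> w)) = shiftZ 1 (morphZ \<tau> x)"
proof -
  let ?W = "concat (map \<tau> w)"
  have "shiftZ (int (length ?W)) (morphZ \<tau> x) = morphZ \<tau> x"
    using morphZ_shiftZ[OF assms(1), of "int (length w)" x] cumlen_periodicZ[OF assms(3), of \<tau>]
      periodicZ_eq_shiftZ_period[OF assms(3)] by simp
  have "0 < length ?W"
    using concat_map_non_erasing_neq_Nil[OF assms(1,2)] by blast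
  show ?thesis
  proof (rule periodic_eqI[of "int (length ?W)"])
    show "shiftZ (int (length ?W)) (shiftZ 1 (morphZ \<tau> x)) = shiftZ 1 (morphZ \<tau> x)"
      using \<open>shiftZ (int (length ?W)) (morphZ \<tau> x) = morphZ \<tau> x\<close> by simp
    show "periodicZ ?W i = shiftZ 1 (morphZ \<tau> x) i" if "0 \<le> i" "i < int (length ?W)" for i
    proof -
      have "nat i < length ?W"
        using that by linarith
      then have "morphZ \<tau> x (int (nat i) + 1) = ?W ! nat i"
        by (intro morphZ_prefix[OF assms(1)] periodicZ_eq_shiftZ_nth[OF assms(3)])
      moreover have "periodicZ ?W (int (nat i)) = ?W ! nat i"
        using \<open>nat i < length ?W\<close> by (rule periodicZ_nth)
      ultimately show ?thesis
        using that(1) by simp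
    qed
  qed (use \<open>0 < length ?W\<close> periodicZ_period in simp_all)
qed

section \<open>Topology of the full shift\<close>

lemma topspace_fullshift [simp]: "topspace fullshift_top = UNIV"
  by (simp add: fullshift_top_def)

lemma Hausdorff_space_fullshift: "Hausdorff_space fullshift_top"
  unfolding fullshift_top_def by (simp add: Hausdorff_space_product_topology)

lemma compact_space_fullshift: "compact_space (fullshift_top :: (int \<Rightarrow> 'a::finite) topology)"
  unfolding fullshift_top_def
  by (simp add: compact_space_product_topology compact_space_discrete_topology)

lemma closedin_fullshift_finite:
  assumes "finite S"
  shows "closedin fullshift_top S"
  by (intro t1_space_closedin_finite[THEN iffD1, rule_format]
      Hausdorff_imp_t1_space[OF Hausdorff_space_fullshift]) (simp add: assms)

lemma closedin_fullshift_letter: "closedin fullshift_top {x. x i = a}"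
proof -
  have "continuous_map fullshift_top (discrete_topology UNIV) (\<lambda>x. x i)"
    unfolding fullshift_top_def by (rule continuous_map_product_projection) simp
  then show ?thesis
    using closedin_continuous_map_preimage[of _ _ _ "{a}"] by fastforce
qed

lemma openin_fullshift_cylinder:
  assumes "finite W"
  shows "openin fullshift_top {z. \<forall>j\<in>W. z j = x j}"
proof -
  define S where "S j = (if j \<in> W then {x j} else UNIV)" for j
  have "{z. \<forall>j\<in>W. z j = x j} = PiE UNIV S"
    by (auto simp: S_def PiE_UNIV_domain Pi_def split: if_splits)
  moreover have "finite {j \<in> UNIV. S j \<noteq> topspace (discrete_topology UNIV)}"
    by (rule finite_subset[OF _ assms]) (auto simp: S_def)
  ultimately show ?thesis
    unfolding fullshift_top_def by (simp add: openin_PiE_gen)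
qed

lemma continuous_map_fullshift_local:
  assumes "\<And>i. \<exists>N. \<forall>x y. (\<forall>j. \<bar>j\<bar> \<le> N \<longrightarrow> x j = y j) \<longrightarrow> f x i = f y i"
  shows "continuous_map fullshift_top fullshift_top f"
  unfolding fullshift_top_def continuous_map_componentwise_UNIV
proof
  fix i
  obtain N where N: "\<And>x y. \<forall>j. \<bar>j\<bar> \<le> N \<longrightarrow> x j = y j \<Longrightarrow> f x i = f y i"
    using assms by blast
  have "openin fullshift_top {x. f x i \<in> U}" for U
  proof (subst openin_subopen, intro ballI)
    fix x
    assume "x \<in> {x. f x i \<in> U}"
    define C where "C = {z. \<forall>j\<in>{-N..N}. z j = x j}"
    have "openin fullshift_top C"
      unfolding C_def by (simp add: openin_fullshift_cylinder)
    moreover have "C \<subseteq> {x. f x i \<in> U}"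
    proof
      fix z
      assume "z \<in> C"
      then have "f z i = f x i"
        by (intro N) (auto simp: C_def abs_le_iff)
      then show "z \<in> {x. f x i \<in> U}"
        using \<open>x \<in> {x. f x i \<in> U}\<close> by simp
    qed
    ultimately show "\<exists>T. openin fullshift_top T \<and> x \<in> T \<and> T \<subseteq> {x. f x i \<in> U}"
      by (auto simp: C_def)
  qed
  then show "continuous_map (product_topology (\<lambda>_. discrete_topology UNIV) UNIV)
      (discrete_topology UNIV) (\<lambda>x. f x i)"
    by (simp add: continuous_map_def fullshift_top_def)
qed

lemma continuous_map_shiftZ: "continuous_map fullshift_top fullshift_top (shiftZ k)"
proof (rule continuous_map_fullshift_local)
  show "\<exists>N. \<forall>x y. (\<forall>j. \<bar>j\<bar> \<le> N \<longrightarrow> x j = y j) \<longrightarrow> shiftZ k x i = shiftZ k y i" for i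
    by (intro exI[of _ "\<bar>i + k\<bar>"]) simp
qed

lemma continuous_map_morphZ:
  assumes "non_erasing \<tau>"
  shows "continuous_map fullshift_top fullshift_top (morphZ \<tau>)"
proof (rule continuous_map_fullshift_local)
  show "\<exists>N. \<forall>x y. (\<forall>j. \<bar>j\<bar> \<le> N \<longrightarrow> x j = y j) \<longrightarrow> morphZ \<tau> x i = morphZ \<tau> y i" for i
    by (intro exI[of _ "\<bar>i\<bar> + 2"] allI impI morphZ_local[OF assms]) blast
qed

section \<open>Subshifts and image subshifts\<close>

lemma subshift_shiftZ:
  assumes "subshift X" "x \<in> X"
  shows "shiftZ k x \<in> X"
proof -
  have X: "shiftZ 1 ` X = X"
    using assms(1) by (simp add: subshift_def)
  have up: "shiftZ 1 y \<in> X" if "y \<in> X" for y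
    using imageI[OF that, of "shiftZ 1"] by (simp only: X)
  have down: "shiftZ (- 1) y \<in> X" if "y \<in> X" for y
  proof -
    have "y \<in> shiftZ 1 ` X"
      using that by (simp only: X)
    then obtain z where "z \<in> X" "y = shiftZ 1 z"
      by blast
    then show ?thesis
      by simp
  qed
  show ?thesis
  proof (induction k rule: int_induct[where k = 0])
    case (step1 i)
    then show ?case
      using up[of "shiftZ i x"] by (metis add.commute shiftZ_shiftZ)
  next
    case (step2 i)
    then show ?case
      using down[of "shiftZ i x"] by (metis diff_conv_add_uminus add.commute shiftZ_shiftZ)
  qed (use assms(2) in simp)
qed

lemma subshiftI:
  assumes "X \<noteq> {}" "closedin fullshift_top X" "\<And>x k. x \<in> X \<Longrightarrow> shiftZ k x \<in> X"
  shows "subshift X"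
proof -
  have "shiftZ 1 ` X = X"
  proof
    show "X \<subseteq> shiftZ 1 ` X"
    proof
      fix x
      assume "x \<in> X"
      then have "x = shiftZ 1 (shiftZ (- 1) x)" "shiftZ (- 1) x \<in> X"
        using assms(3) by simp_all
      then show "x \<in> shiftZ 1 ` X"
        by blast
    qed
  qed (use assms(3) in auto)
  then show ?thesis
    using assms by (simp add: subshift_def)
qed

lemma compactin_subshift: "subshift X \<Longrightarrow> compactin fullshift_top (X :: (int \<Rightarrow> 'a::finite) set)"
  by (simp add: subshift_def closedin_compact_space compact_space_fullshift)

lemma morphZ_in_image_subshift: "x \<in> X \<Longrightarrow> morphZ \<tau> x \<in> image_subshift \<tau> X"
  by (auto simp: image_subshift_def)

lemma image_subshift_least: "subshift Y \<Longrightarrow> morphZ \<tau> ` X \<subseteq> Y \<Longrightarrow> image_subshift \<tau> X \<subseteq> Y"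
  by (auto simp: image_subshift_def)

lemma subshift_image_subshift:
  assumes "X \<noteq> {}"
  shows "subshift (image_subshift \<tau> X)"
proof (rule subshiftI)
  show "image_subshift \<tau> X \<noteq> {}"
    using assms morphZ_in_image_subshift by blast
  have "subshift UNIV"
    using closedin_topspace[of fullshift_top] by (intro subshiftI) simp_all
  then show "closedin fullshift_top (image_subshift \<tau> X)"
    unfolding image_subshift_def by (intro closedin_Inter) (auto simp: subshift_def)
  show "shiftZ k y \<in> image_subshift \<tau> X" if "y \<in> image_subshift \<tau> X" for y k
    using that subshift_shiftZ unfolding image_subshift_def by blast
qed

text \<open>Recognizability of \<open>\<tau>\<close> in \<open>X\<close> says that every point of this set has a unique
  representation.\<close>

definition block_shifts :: "('a \<Rightarrow> 'b list) \<Rightarrow> (int \<Rightarrow> 'a) set \<Rightarrow> (int \<Rightarrow> 'b) set" where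
  "block_shifts \<tau> X =
    {shiftZ k (morphZ \<tau> x) | x k. x \<in> X \<and> 0 \<le> k \<and> k < int (length (\<tau> (x 1)))}"

lemma block_shiftsE:
  assumes "z \<in> block_shifts \<tau> X"
  obtains x k where "x \<in> X" "0 \<le> k" "k < int (length (\<tau> (x 1)))" "z = shiftZ k (morphZ \<tau> x)"
  using assms unfolding block_shifts_def by blast

context
  fixes \<tau> :: "'a::finite \<Rightarrow> 'b list" and X :: "(int \<Rightarrow> 'a) set"
  assumes non_erasing: "non_erasing \<tau>" and subshift: "subshift X"
begin

lemma shiftZ_morphZ_in_block_shifts:
  assumes "x \<in> X"
  shows "shiftZ m (morphZ \<tau> x) \<in> block_shifts \<tau> X"
proof -
  obtain j k where jk: "0 \<le> k" "k < int (length (\<tau> (x (j + 1))))" "m = cumlen \<tau> x j + k"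
    using cumlen_decomposition[OF non_erasing] by blast
  then have "shiftZ m (morphZ \<tau> x) = shiftZ k (morphZ \<tau> (shiftZ j x))"
    by (simp add: morphZ_shiftZ[OF non_erasing] add.commute)
  moreover have "shiftZ j x \<in> X"
    using subshift assms by (rule subshift_shiftZ)
  ultimately show ?thesis
    unfolding block_shifts_def mem_Collect_eq
    by (intro exI[of _ "shiftZ j x"] exI[of _ k]) (use jk in \<open>simp add: add.commute\<close>)
qed

lemma compactin_block_shifts: "compactin fullshift_top (block_shifts \<tau> X)"
proof -
  have "block_shifts \<tau> X = (\<Union>a. \<Union>k\<in>{0..<int (length (\<tau> a))}.
      (\<lambda>x. shiftZ k (morphZ \<tau> x)) ` (X \<inter> {x. x 1 = a}))" (is "_ = ?U")
  proof
    show "block_shifts \<tau> X \<subseteq> ?U"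
    proof
      fix z
      assume "z \<in> block_shifts \<tau> X"
      then obtain x k where "x \<in> X" "0 \<le> k" "k < int (length (\<tau> (x 1)))"
        "z = shiftZ k (morphZ \<tau> x)"
        by (rule block_shiftsE)
      then show "z \<in> ?U"
        by (intro UN_I[of "x 1"] UN_I[of k]) auto
    qed
    show "?U \<subseteq> block_shifts \<tau> X"
    proof
      fix z
      assume "z \<in> ?U"
      then obtain a k x where "k \<in> {0..<int (length (\<tau> a))}" "x \<in> X" "x 1 = a"
        "z = shiftZ k (morphZ \<tau> x)"
        by blast
      then show "z \<in> block_shifts \<tau> X"
        unfolding block_shifts_def mem_Collect_eq by (intro exI[of _ x] exI[of _ k]) auto
    qed
  qed
  moreover have "compactin fullshift_top ((\<lambda>x. shiftZ k (morphZ \<tau> x)) ` (X \<inter> {x. x 1 = a}))"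
    for a k
  proof (rule image_compactin)
    show "compactin fullshift_top (X \<inter> {x. x 1 = a})"
      using compactin_subshift[OF subshift] closedin_fullshift_letter by (rule compact_Int_closedin)
    show "continuous_map fullshift_top fullshift_top (\<lambda>x. shiftZ k (morphZ \<tau> x))"
      using continuous_map_compose[OF continuous_map_morphZ[OF non_erasing] continuous_map_shiftZ]
      by (simp add: o_def)
  qed
  ultimately show ?thesis
    by (auto intro!: compactin_Union)
qed

lemma image_subshift_eq_block_shifts: "image_subshift \<tau> X = block_shifts \<tau> X"
proof
  have "subshift (block_shifts \<tau> X)"
  proof (rule subshiftI)
    obtain x where "x \<in> X"
      using subshift by (auto simp: subshift_def)
    then show "block_shifts \<tau> X \<noteq> {}"
      using shiftZ_morphZ_in_block_shifts by blast
    show "closedin fullshift_top (block_shifts \<tau> X)"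
      by (simp add: compactin_block_shifts compactin_imp_closedin Hausdorff_space_fullshift)
    show "shiftZ m z \<in> block_shifts \<tau> X" if "z \<in> block_shifts \<tau> X" for z m
      using that by (elim block_shiftsE) (simp add: shiftZ_morphZ_in_block_shifts)
  qed
  moreover have "morphZ \<tau> ` X \<subseteq> block_shifts \<tau> X"
    using shiftZ_morphZ_in_block_shifts[of _ 0] by auto
  ultimately show "image_subshift \<tau> X \<subseteq> block_shifts \<tau> X"
    by (rule image_subshift_least)
  have "subshift (image_subshift \<tau> X)"
    using subshift subshift_image_subshift by (auto simp: subshift_def)
  show "block_shifts \<tau> X \<subseteq> image_subshift \<tau> X"
  proof
    fix z
    assume "z \<in> block_shifts \<tau> X"
    then obtain x k where "x \<in> X" "z = shiftZ k (morphZ \<tau> x)"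
      by (rule block_shiftsE)
    then show "z \<in> image_subshift \<tau> X"
      using \<open>subshift (image_subshift \<tau> X)\<close> morphZ_in_image_subshift subshift_shiftZ by blast
  qed
qed

lemma compactin_image_subshift: "compactin fullshift_top (image_subshift \<tau> X)"
  by (simp add: image_subshift_eq_block_shifts compactin_block_shifts)

end

section \<open>Recognizability as lifting of shifts\<close>

lemma recognizableD:
  assumes "recognizable \<tau> X" "x \<in> X" "x' \<in> X"
    and "0 \<le> k" "k < int (length (\<tau> (x 1)))" "0 \<le> l" "l < int (length (\<tau> (x' 1)))"
    and "shiftZ k (morphZ \<tau> x) = shiftZ l (morphZ \<tau> x')"
  shows "x = x' \<and> k = l"
  using assms unfolding recognizable_def by force

lemma recognizableI:
  assumes "\<And>x x' k l. x \<in> X \<Longrightarrow> x' \<in> X \<Longrightarrow> 0 \<le> k \<Longrightarrow> k < int (length (\<tau> (x 1)))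
    \<Longrightarrow> 0 \<le> l \<Longrightarrow> l < int (length (\<tau> (x' 1)))
    \<Longrightarrow> shiftZ k (morphZ \<tau> x) = shiftZ l (morphZ \<tau> x') \<Longrightarrow> x = x' \<and> k = l"
  shows "recognizable \<tau> X"
  using assms unfolding recognizable_def by auto

definition lifts_shifts :: "('a \<Rightarrow> 'b list) \<Rightarrow> (int \<Rightarrow> 'a) set \<Rightarrow> bool" where
  "lifts_shifts \<tau> X \<longleftrightarrow> (\<forall>x\<in>X. \<forall>y\<in>X. \<forall>m. shiftZ m (morphZ \<tau> x) = morphZ \<tau> y
     \<longrightarrow> (\<exists>j. y = shiftZ j x \<and> m = cumlen \<tau> x j))"

context
  fixes \<tau> :: "'a \<Rightarrow> 'b list"
  assumes non_erasing: "non_erasing \<tau>"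
begin

lemma recognizable_imp_lifts_shifts:
  assumes "subshift X" "recognizable \<tau> X"
  shows "lifts_shifts \<tau> X"
  unfolding lifts_shifts_def
proof (intro ballI allI impI)
  fix x y m
  assume "x \<in> X" "y \<in> X" and image_shift: "shiftZ m (morphZ \<tau> x) = morphZ \<tau> y"
  obtain j k where jk: "0 \<le> k" "k < int (length (\<tau> (x (j + 1))))" "m = cumlen \<tau> x j + k"
    using cumlen_decomposition[OF non_erasing] by blast
  have "shiftZ j x = y \<and> k = 0"
  proof (rule recognizableD[OF assms(2)])
    show "shiftZ j x \<in> X"
      using assms(1) \<open>x \<in> X\<close> by (rule subshift_shiftZ)
    show "shiftZ k (morphZ \<tau> (shiftZ j x)) = shiftZ 0 (morphZ \<tau> y)"
      using image_shift jk(3) by (simp add: morphZ_shiftZ[OF non_erasing] add.commute)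
  qed (use \<open>y \<in> X\<close> jk length_pos[OF non_erasing] in \<open>simp_all add: add.commute\<close>)
  then show "\<exists>j. y = shiftZ j x \<and> m = cumlen \<tau> x j"
    using jk(3) by auto
qed

lemma lifts_shifts_imp_recognizable:
  assumes "lifts_shifts \<tau> X"
  shows "recognizable \<tau> X"
proof (rule recognizableI)
  fix x x' k l
  assume "x \<in> X" "x' \<in> X" "0 \<le> k" "k < int (length (\<tau> (x 1)))"
    "0 \<le> l" "l < int (length (\<tau> (x' 1)))"
    and "shiftZ k (morphZ \<tau> x) = shiftZ l (morphZ \<tau> x')"
  then have "shiftZ (k - l) (morphZ \<tau> x) = morphZ \<tau> x'"
    by (simp add: shiftZ_eq_iff)
  then obtain j where j: "x' = shiftZ j x" "k - l = cumlen \<tau> x j"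
    using assms \<open>x \<in> X\<close> \<open>x' \<in> X\<close> unfolding lifts_shifts_def by blast
  have "j = 0"
    by (rule cumlen_decomposition_unique[OF non_erasing, of x j l 0 k])
      (use j \<open>0 \<le> k\<close> \<open>k < _\<close> \<open>0 \<le> l\<close> \<open>l < _\<close> in \<open>simp_all add: add.commute\<close>)
  then show "x = x' \<and> k = l"
    using j by simp
qed

lemma lifts_shifts_imp_orbit_injective:
  assumes "lifts_shifts \<tau> X"
  shows "orbit_injective \<tau> X"
  unfolding orbit_injective_def
proof (intro ballI)
  fix x y
  assume "x \<in> X" "y \<in> X"
  show "same_orbit (morphZ \<tau> x) (morphZ \<tau> y) \<longleftrightarrow> same_orbit x y"
  proof
    assume "same_orbit (morphZ \<tau> x) (morphZ \<tau> y)"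
    then obtain m where "shiftZ m (morphZ \<tau> x) = morphZ \<tau> y"
      by (auto simp: same_orbit_def)
    then show "same_orbit x y"
      using assms \<open>x \<in> X\<close> \<open>y \<in> X\<close> unfolding lifts_shifts_def same_orbit_def by blast
  next
    assume "same_orbit x y"
    then show "same_orbit (morphZ \<tau> x) (morphZ \<tau> y)"
      by (auto simp: same_orbit_def morphZ_shiftZ[OF non_erasing])
  qed
qed

lemma lifts_shifts_imp_period_preserving:
  assumes "subshift X" "lifts_shifts \<tau> X"
  shows "period_preserving \<tau> X"
  unfolding period_preserving_def
proof (intro allI impI iffI)
  fix w
  assume w: "w \<noteq> [] \<and> periodicZ w \<in> X"
  let ?W = "concat (map \<tau> w)"
  show "proper_power w" if "proper_power ?W"
  proof -
    define x where "x = shiftZ (- 1) (periodicZ w)"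
    have "x \<in> X"
      unfolding x_def using w by (intro subshift_shiftZ[OF assms(1)]) simp
    have x_word: "periodicZ w = shiftZ 1 x"
      by (simp add: x_def)
    have "?W \<noteq> []"
      using concat_map_non_erasing_neq_Nil[OF non_erasing] w by blast
    then have "\<exists>d>0. d < int (length ?W) \<and> shiftZ d (periodicZ ?W) = periodicZ ?W"
      using proper_power_iff_period that by blast
    then obtain d where d: "0 < d" "d < int (length ?W)" "shiftZ d (periodicZ ?W) = periodicZ ?W"
      by blast
    have "periodicZ ?W = shiftZ 1 (morphZ \<tau> x)"
      using non_erasing w x_word by (blast intro: morphZ_periodicZ)
    then have "shiftZ d (morphZ \<tau> x) = morphZ \<tau> x"
      using d(3) by simp
    then obtain j where j: "shiftZ j x = x" "d = cumlen \<tau> x j"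
      using assms(2) \<open>x \<in> X\<close> unfolding lifts_shifts_def by (metis (no_types))
    have "cumlen \<tau> x 0 < cumlen \<tau> x j" "cumlen \<tau> x j < cumlen \<tau> x (int (length w))"
      using d j(2) cumlen_periodicZ[OF x_word, of \<tau>] by simp_all
    then have "0 < j" "j < int (length w)"
      using cumlen_less_iff[OF non_erasing] by blast+
    moreover have "shiftZ j (periodicZ w) = periodicZ w"
      using j(1) by (simp add: x_word)
    ultimately show "proper_power w"
      using proper_power_iff_period w by blast
  qed
qed (rule proper_power_concat_map)

end

section \<open>Shift-orbit injectivity and periodic points\<close>

lemma compact_Hausdorff_countable_isolated_point:
  assumes "compact_space T" "Hausdorff_space T" "countable (topspace T)" "topspace T \<noteq> {}"
  shows "\<exists>a\<in>topspace T. openin T {a}"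
proof (rule ccontr)
  assume no_isolated: "\<not> (\<exists>a\<in>topspace T. openin T {a})"
  have "T interior_of \<Union> ((\<lambda>a. {a}) ` topspace T) = {}"
  proof (rule Baire_category_alt)
    have "locally_compact_space T" "regular_space T"
      using assms(1,2) by (simp_all add: compact_imp_locally_compact_space compact_Hausdorff_imp_regular_space)
    then show "completely_metrizable_space T \<or> locally_compact_space T \<and> regular_space T"
      by blast
    show "countable ((\<lambda>a. {a}) ` topspace T)"
      using assms(3) by simp
  next
    fix S
    assume "S \<in> (\<lambda>a. {a}) ` topspace T"
    then obtain a where a: "a \<in> topspace T" "S = {a}"
      by blast
    then have "T interior_of {a} \<noteq> {a}"
      using no_isolated by (simp add: interior_of_eq)
    then have "T interior_of {a} = {}"
      using interior_of_subset[of T "{a}"] by (metis subset_singletonD)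
    moreover have "closedin T {a}"
      using Hausdorff_imp_t1_space[OF assms(2)] a(1) by (rule closedin_t1_singleton)
    ultimately show "closedin T S \<and> T interior_of S = {}"
      using a(2) by simp
  qed
  then show False
    using assms(4) by simp
qed

lemma openin_shift_orbit_singleton:
  assumes "openin (subtopology fullshift_top (shift_orbit x)) {a}" "a \<in> shift_orbit x"
    and y: "y \<in> shift_orbit x"
  shows "openin (subtopology fullshift_top (shift_orbit x)) {y}"
proof -
  obtain U where U: "openin fullshift_top U" "{a} = U \<inter> shift_orbit x"
    using assms(1) by (auto simp: openin_subtopology)
  obtain k1 k2 where "a = shiftZ k1 x" "y = shiftZ k2 x"
    using assms(2) y by (auto simp: shift_orbit_def)
  define k where "k = k1 - k2"
  then have "a = shiftZ k y"
    using \<open>a = shiftZ k1 x\<close> \<open>y = shiftZ k2 x\<close> by simp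
  define V where "V = {z \<in> topspace fullshift_top. shiftZ k z \<in> U}"
  have "openin fullshift_top V"
    unfolding V_def using continuous_map_shiftZ U(1) by (rule openin_continuous_map_preimage)
  moreover have "z \<in> V \<inter> shift_orbit x \<longleftrightarrow> z \<in> shift_orbit x \<and> shiftZ k z = a" for z
    using U(2) shiftZ_in_shift_orbit by (auto simp: V_def)
  then have "{y} = V \<inter> shift_orbit x"
    using y \<open>a = shiftZ k y\<close> by auto
  ultimately show ?thesis
    by (auto simp: openin_subtopology)
qed

lemma finite_shift_orbit_if_compactin:
  assumes "compactin fullshift_top (shift_orbit x)"
  shows "finite (shift_orbit x)"
proof -
  let ?O = "shift_orbit x"
  define T where "T = subtopology fullshift_top ?O"
  have T: "topspace T = ?O" "compact_space T" "Hausdorff_space T"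
    using compact_space_subtopology[OF assms] Hausdorff_space_subtopology[OF Hausdorff_space_fullshift]
    by (simp_all add: T_def)
  moreover have "countable ?O" "?O \<noteq> {}"
    by (simp_all add: shift_orbit_def)
  ultimately obtain a where "a \<in> ?O" "openin T {a}"
    using compact_Hausdorff_countable_isolated_point by metis
  then have "\<forall>y\<in>?O. openin T {y}"
    unfolding T_def using openin_shift_orbit_singleton by blast
  then have "T = discrete_topology ?O"
    using T(1) discrete_topology_unique by metis
  then show ?thesis
    using T(2) compact_space_discrete_topology by metis
qed

context
  fixes \<tau> :: "'a \<Rightarrow> 'b list" and X :: "(int \<Rightarrow> 'a) set"
  assumes non_erasing: "non_erasing \<tau>" and subshift: "subshift X"
    and compact: "compactin fullshift_top X" and orbit_injective: "orbit_injective \<tau> X"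
begin

lemma orbit_injective_shift_orbit_eq:
  assumes "x \<in> X"
  shows "shift_orbit x = X \<inter> morphZ \<tau> -` shift_orbit (morphZ \<tau> x)"
proof
  show "shift_orbit x \<subseteq> X \<inter> morphZ \<tau> -` shift_orbit (morphZ \<tau> x)"
  proof
    fix z
    assume "z \<in> shift_orbit x"
    then obtain k where "z = shiftZ k x"
      by (auto simp: shift_orbit_def)
    moreover have "shiftZ (cumlen \<tau> x k) (morphZ \<tau> x) \<in> shift_orbit (morphZ \<tau> x)"
      by (intro shiftZ_in_shift_orbit in_shift_orbit_self)
    ultimately show "z \<in> X \<inter> morphZ \<tau> -` shift_orbit (morphZ \<tau> x)"
      using subshift_shiftZ[OF subshift assms] by (simp add: morphZ_shiftZ[OF non_erasing])
  qed
  show "X \<inter> morphZ \<tau> -` shift_orbit (morphZ \<tau> x) \<subseteq> shift_orbit x"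
    using orbit_injective assms by (auto simp: orbit_injective_def same_orbit_iff_in_shift_orbit)
qed

lemma orbit_injective_periodic_point:
  assumes "x \<in> X" "p \<noteq> 0" "shiftZ p (morphZ \<tau> x) = morphZ \<tau> x"
  shows "\<exists>q>0. shiftZ q x = x"
proof -
  have "0 < \<bar>p\<bar>" "shiftZ \<bar>p\<bar> (morphZ \<tau> x) = morphZ \<tau> x"
    using assms(2,3) by simp_all
  then have "finite (shift_orbit (morphZ \<tau> x))"
    unfolding finite_shift_orbit_iff by (intro exI[of _ "\<bar>p\<bar>"]) simp
  then have "closedin fullshift_top (morphZ \<tau> -` shift_orbit (morphZ \<tau> x))"
    using closedin_continuous_map_preimage[OF continuous_map_morphZ[OF non_erasing]
        closedin_fullshift_finite] by (simp add: vimage_def)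
  moreover have "closedin fullshift_top X"
    using subshift by (simp add: subshift_def)
  ultimately have "closedin fullshift_top (shift_orbit x)"
    unfolding orbit_injective_shift_orbit_eq[OF assms(1)] by (intro closedin_Int)
  moreover have "shift_orbit x \<subseteq> X"
    unfolding orbit_injective_shift_orbit_eq[OF assms(1)] by blast
  ultimately have "compactin fullshift_top (shift_orbit x)"
    by (intro closed_compactin[OF compact])
  then show ?thesis
    using finite_shift_orbit_if_compactin finite_shift_orbit_iff by blast
qed

lemma orbit_injective_period_preserving_lift_period:
  assumes "period_preserving \<tau> X" "x \<in> X" "shiftZ p (morphZ \<tau> x) = morphZ \<tau> x"
  shows "\<exists>j. shiftZ j x = x \<and> p = cumlen \<tau> x j"
proof (cases "p = 0")
  case False
  then obtain q where "0 < q" "shiftZ q x = x"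
    using orbit_injective_periodic_point assms(2,3) by blast
  then obtain w where w: "w \<noteq> []" "\<not> proper_power w" "periodicZ w = shiftZ 1 x"
    by (rule periodic_point_primitive_word)
  let ?W = "concat (map \<tau> w)"
  text \<open>Period preservation makes \<open>?W\<close> primitive, so every period of \<open>\<tau>\<^sup>\<int>(x)\<close> is a
    multiple of \<open>|?W|\<close>.\<close>
  have "periodicZ w \<in> X"
    using w(3) subshift_shiftZ[OF subshift assms(2)] by simp
  then have "\<not> proper_power ?W"
    using assms(1) w(1,2) unfolding period_preserving_def by blast
  moreover have "shiftZ p (periodicZ ?W) = periodicZ ?W"
    using morphZ_periodicZ[OF non_erasing w(1,3)] assms(3) by simp
  ultimately obtain t where t: "p = t * int (length ?W)"
    using primitive_word_period_dvd concat_map_non_erasing_neq_Nil[OF non_erasing w(1)]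
    by (metis dvd_def mult.commute)
  have "shiftZ (t * int (length w)) x = x"
    using periodicZ_eq_shiftZ_period[OF w(3)] by (rule shiftZ_period_mult)
  moreover have "cumlen \<tau> x (t * int (length w)) = p"
    using cumlen_mult_period[OF periodicZ_eq_shiftZ_period[OF w(3)], of \<tau> t]
      cumlen_periodicZ[OF w(3), of \<tau>] t by simp
  ultimately show ?thesis
    by metis
qed (intro exI[of _ 0], simp)

lemma orbit_injective_period_preserving_imp_lifts_shifts:
  assumes "period_preserving \<tau> X"
  shows "lifts_shifts \<tau> X"
  unfolding lifts_shifts_def
proof (intro ballI allI impI)
  fix x y m
  assume "x \<in> X" "y \<in> X" and image_shift: "shiftZ m (morphZ \<tau> x) = morphZ \<tau> y"
  then have "same_orbit x y"
    using orbit_injective unfolding orbit_injective_def same_orbit_def by metis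
  then obtain j where j: "y = shiftZ j x"
    by (auto simp: same_orbit_def)
  then have "shiftZ (m - cumlen \<tau> x j) (morphZ \<tau> x) = morphZ \<tau> x"
    using image_shift by (simp add: morphZ_shiftZ[OF non_erasing] shiftZ_eq_iff)
  then obtain i where i: "shiftZ i x = x" "m - cumlen \<tau> x j = cumlen \<tau> x i"
    using orbit_injective_period_preserving_lift_period[OF assms \<open>x \<in> X\<close>] by blast
  have "y = shiftZ (j + i) x"
    using i(1) j by (metis shiftZ_shiftZ)
  moreover have "cumlen \<tau> x (j + i) = cumlen \<tau> x j + cumlen \<tau> x i"
    using cumlen_shiftZ[of \<tau> i x j] i(1) by simp
  ultimately show "\<exists>j. y = shiftZ j x \<and> m = cumlen \<tau> x j"
    using i(2) by (intro exI[of _ "j + i"]) simp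
qed

end

theorem recognizable_iff_orbit_injective_period_preserving:
  assumes "non_erasing \<tau>" "subshift X" "compactin fullshift_top X"
  shows "recognizable \<tau> X \<longleftrightarrow> orbit_injective \<tau> X \<and> period_preserving \<tau> X"
proof -
  have "recognizable \<tau> X \<longleftrightarrow> lifts_shifts \<tau> X"
    using recognizable_imp_lifts_shifts lifts_shifts_imp_recognizable assms(1,2) by blast
  also have "\<dots> \<longleftrightarrow> orbit_injective \<tau> X \<and> period_preserving \<tau> X"
    using lifts_shifts_imp_orbit_injective lifts_shifts_imp_period_preserving
      orbit_injective_period_preserving_imp_lifts_shifts assms by metis
  finally show ?thesis .
qed

section \<open>The subdivision \<open>\<sigma> = \<alpha>\<^sub>\<sigma> \<circ> \<pi>\<^sub>\<sigma>\<close>\<close>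

lemma length_subdiv [simp]: "length (subdiv \<sigma> a) = length (\<sigma> a)"
  by (simp add: subdiv_def del: upt_Suc)

lemma non_erasing_subdiv: "non_erasing \<sigma> \<Longrightarrow> non_erasing (subdiv \<sigma>)"
  by (simp add: non_erasing_def flip: length_greater_0_conv)

lemma cumlen_subdiv [simp]: "cumlen (subdiv \<sigma>) = cumlen \<sigma>"
  by (simp add: cumlen_def fun_eq_iff)

lemma morphZ_subdiv_decomposition:
  assumes "non_erasing \<sigma>" "0 \<le> k" "k < int (length (\<sigma> (x (j + 1))))"
  shows "morphZ (subdiv \<sigma>) x (cumlen \<sigma> x j + k + 1) = (x (j + 1), nat k + 1)"
  using morphZ_decomposition[OF non_erasing_subdiv[OF assms(1)], of k x j] assms(2,3)
  by (simp add: subdiv_def nat_less_iff del: upt_Suc)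

lemma cumlen_letter_to_letter:
  assumes "\<And>a. length (\<rho> a) = 1"
  shows "cumlen \<rho> x n = n"
proof (rule int_fun_eqI_differences)
  show "cumlen \<rho> x m - cumlen \<rho> x (m - 1) = m - (m - 1)" for m
    using cumlen_step[of \<rho> x m] assms by simp
qed simp

lemma morphZ_letter_to_letter:
  assumes "\<And>a. length (\<rho> a) = 1"
  shows "morphZ \<rho> x i = hd (\<rho> (x i))"
proof -
  have "non_erasing \<rho>"
    using assms by (simp add: non_erasing_def flip: length_greater_0_conv)
  then have "morphZ \<rho> x (cumlen \<rho> x (i - 1) + 0 + 1) = \<rho> (x (i - 1 + 1)) ! nat 0"
    by (rule morphZ_decomposition) (simp_all add: assms)
  then show ?thesis
    using assms[of "x i"]
    by (simp add: cumlen_letter_to_letter[OF assms] hd_conv_nth flip: length_greater_0_conv)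
qed

lemma length_subdiv_letter [simp]: "length (subdiv_letter \<sigma> c) = 1"
  by (simp add: subdiv_letter_def)

lemma morphZ_subdiv_letter: "morphZ (subdiv_letter \<sigma>) z i = \<sigma> (fst (z i)) ! (snd (z i) - 1)"
  by (simp add: morphZ_letter_to_letter subdiv_letter_def)

lemma non_erasing_subdiv_letter: "non_erasing (subdiv_letter \<sigma>)"
  by (simp add: non_erasing_def subdiv_letter_def)

lemma morphZ_subdiv_letter_shiftZ:
  "morphZ (subdiv_letter \<sigma>) (shiftZ k z) = shiftZ k (morphZ (subdiv_letter \<sigma>) z)"
  by (simp add: fun_eq_iff morphZ_subdiv_letter)

context
  fixes \<sigma> :: "'a \<Rightarrow> 'b list"
  assumes non_erasing: "non_erasing \<sigma>"
begin

lemma morphZ_subdiv_letter_subdiv: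
  "morphZ (subdiv_letter \<sigma>) (morphZ (subdiv \<sigma>) x) = morphZ \<sigma> x"
proof
  fix i
  obtain j k where jk: "0 \<le> k" "k < int (length (\<sigma> (x (j + 1))))" "i - 1 = cumlen \<sigma> x j + k"
    using cumlen_decomposition[OF non_erasing] by blast
  then have "i = cumlen \<sigma> x j + k + 1"
    by simp
  then show "morphZ (subdiv_letter \<sigma>) (morphZ (subdiv \<sigma>) x) i = morphZ \<sigma> x i"
    using morphZ_subdiv_decomposition[OF non_erasing, of k x j]
      morphZ_decomposition[OF non_erasing, of k x j] jk(1,2)
    by (simp add: morphZ_subdiv_letter)
qed

lemma morphZ_subdiv_inject:
  assumes "morphZ (subdiv \<sigma>) x = morphZ (subdiv \<sigma>) y"
  shows "x = y"
proof -
  text \<open>The block of \<open>\<pi>\<^sub>\<sigma>(x)\<close> coming from \<open>x\<^sub>j\<close> starts with \<open>x\<^sub>j(1)\<close> and ends with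
    \<open>x\<^sub>j(|\<sigma>(x\<^sub>j)|)\<close>, so the block boundaries of \<open>x\<close> and \<open>y\<close> agree, going up and going down.\<close>
  have first: "x (j + 1) = y (j + 1)" if "cumlen \<sigma> x j = cumlen \<sigma> y j" for j
    using morphZ_subdiv_decomposition[OF non_erasing, of 0 x j]
      morphZ_subdiv_decomposition[OF non_erasing, of 0 y j] length_pos[OF non_erasing]
    by (simp add: assms that)
  have last: "x j = y j" if "cumlen \<sigma> x j = cumlen \<sigma> y j" for j
  proof -
    have "cumlen \<sigma> x j = cumlen \<sigma> x (j - 1) + (int (length (\<sigma> (x j))) - 1) + 1"
      "cumlen \<sigma> y j = cumlen \<sigma> y (j - 1) + (int (length (\<sigma> (y j))) - 1) + 1"
      using cumlen_step[of \<sigma> _ j] by simp_all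
    then show ?thesis
      using morphZ_subdiv_decomposition[OF non_erasing, of "int (length (\<sigma> (x j))) - 1" x "j - 1"]
        morphZ_subdiv_decomposition[OF non_erasing, of "int (length (\<sigma> (y j))) - 1" y "j - 1"]
        length_pos[OF non_erasing] by (simp add: assms that)
  qed
  have cumlen_eq: "cumlen \<sigma> x j = cumlen \<sigma> y j" for j
  proof (induction j rule: int_induct[where k = 0])
    case (step1 j)
    then show ?case
      using first[of j] cumlen_step[of \<sigma> x "j + 1"] cumlen_step[of \<sigma> y "j + 1"] by simp
  next
    case (step2 j)
    then show ?case
      using last[of j] cumlen_step[of \<sigma> x j] cumlen_step[of \<sigma> y j] by simp
  qed simp
  show ?thesis
  proof
    fix n
    show "x n = y n"
      using first[OF cumlen_eq, of "n - 1"] by simp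
  qed
qed

lemma recognizable_subdiv: "recognizable (subdiv \<sigma>) X"
proof (rule recognizableI)
  fix x x' k l
  assume "0 \<le> k" "k < int (length (subdiv \<sigma> (x 1)))" "0 \<le> l" "l < int (length (subdiv \<sigma> (x' 1)))"
    and eq: "shiftZ k (morphZ (subdiv \<sigma>) x) = shiftZ l (morphZ (subdiv \<sigma>) x')"
  then have "morphZ (subdiv \<sigma>) x (k + 1) = (x 1, nat k + 1)"
    "morphZ (subdiv \<sigma>) x' (l + 1) = (x' 1, nat l + 1)"
    using morphZ_subdiv_decomposition[OF non_erasing, of k x 0]
      morphZ_subdiv_decomposition[OF non_erasing, of l x' 0] by simp_all
  moreover have "morphZ (subdiv \<sigma>) x (k + 1) = morphZ (subdiv \<sigma>) x' (l + 1)"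
    using fun_cong[OF eq, of 1] by (simp add: add.commute)
  ultimately have "k = l"
    using \<open>0 \<le> k\<close> \<open>0 \<le> l\<close> by (simp add: nat_eq_iff2)
  then show "x = x' \<and> k = l"
    using eq morphZ_subdiv_inject by simp
qed

end

lemma letter_to_letter_recognizable_iff_inj_on:
  assumes "\<And>a. length (\<rho> a) = 1"
  shows "recognizable \<rho> Z \<longleftrightarrow> inj_on (morphZ \<rho>) Z"
proof
  assume "recognizable \<rho> Z"
  then show "inj_on (morphZ \<rho>) Z"
    using recognizableD[of \<rho> Z _ _ 0 0] assms by (intro inj_onI) simp
next
  assume inj: "inj_on (morphZ \<rho>) Z"
  show "recognizable \<rho> Z"
  proof (rule recognizableI)
    fix x x' k l
    assume "x \<in> Z" "x' \<in> Z" "0 \<le> k" "k < int (length (\<rho> (x 1)))"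
      "0 \<le> l" "l < int (length (\<rho> (x' 1)))"
      and eq: "shiftZ k (morphZ \<rho> x) = shiftZ l (morphZ \<rho> x')"
    moreover have "k = 0" "l = 0"
      using calculation assms by simp_all
    ultimately show "x = x' \<and> k = l"
      using inj_onD[OF inj] by simp
  qed
qed

context
  fixes \<sigma> :: "'a::finite \<Rightarrow> 'b list" and X :: "(int \<Rightarrow> 'a) set"
  assumes non_erasing: "non_erasing \<sigma>" and subshift: "subshift X"
begin

lemma image_subshift_subdiv_eq:
  "image_subshift (subdiv \<sigma>) X =
    {shiftZ k (morphZ (subdiv \<sigma>) x) | x k. x \<in> X \<and> 0 \<le> k \<and> k < int (length (\<sigma> (x 1)))}"
  using image_subshift_eq_block_shifts[OF non_erasing_subdiv[OF non_erasing] subshift]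
  by (simp add: block_shifts_def)

lemma recognizable_iff_inj_on_subdiv_letter:
  "recognizable \<sigma> X \<longleftrightarrow> inj_on (morphZ (subdiv_letter \<sigma>)) (image_subshift (subdiv \<sigma>) X)"
proof
  assume recognizable: "recognizable \<sigma> X"
  show "inj_on (morphZ (subdiv_letter \<sigma>)) (image_subshift (subdiv \<sigma>) X)"
  proof (rule inj_onI)
    fix z z'
    assume "z \<in> image_subshift (subdiv \<sigma>) X" "z' \<in> image_subshift (subdiv \<sigma>) X"
      and eq: "morphZ (subdiv_letter \<sigma>) z = morphZ (subdiv_letter \<sigma>) z'"
    then obtain x k x' l where
      "x \<in> X" "0 \<le> k" "k < int (length (\<sigma> (x 1)))" "z = shiftZ k (morphZ (subdiv \<sigma>) x)"
      "x' \<in> X" "0 \<le> l" "l < int (length (\<sigma> (x' 1)))" "z' = shiftZ l (morphZ (subdiv \<sigma>) x')"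
      unfolding image_subshift_subdiv_eq by blast
    moreover have "shiftZ k (morphZ \<sigma> x) = shiftZ l (morphZ \<sigma> x')"
      using eq calculation
      by (simp add: morphZ_subdiv_letter_shiftZ morphZ_subdiv_letter_subdiv[OF non_erasing])
    ultimately show "z = z'"
      using recognizableD[OF recognizable] by blast
  qed
next
  assume inj: "inj_on (morphZ (subdiv_letter \<sigma>)) (image_subshift (subdiv \<sigma>) X)"
  show "recognizable \<sigma> X"
  proof (rule recognizableI)
    fix x x' k l
    assume "x \<in> X" "x' \<in> X" "0 \<le> k" "k < int (length (\<sigma> (x 1)))"
      "0 \<le> l" "l < int (length (\<sigma> (x' 1)))"
      and "shiftZ k (morphZ \<sigma> x) = shiftZ l (morphZ \<sigma> x')"
    moreover from this have "shiftZ k (morphZ (subdiv \<sigma>) x) = shiftZ l (morphZ (subdiv \<sigma>) x')"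
      by (intro inj_onD[OF inj])
        (auto simp: image_subshift_subdiv_eq morphZ_subdiv_letter_shiftZ
          morphZ_subdiv_letter_subdiv[OF non_erasing])
    ultimately show "x = x' \<and> k = l"
      using recognizableD[OF recognizable_subdiv[OF non_erasing]] by simp
  qed
qed

lemma image_subdiv_letter_image_subshift:
  "morphZ (subdiv_letter \<sigma>) ` image_subshift (subdiv \<sigma>) X = image_subshift \<sigma> X"
proof -
  have A: "morphZ (subdiv_letter \<sigma>) (shiftZ k (morphZ (subdiv \<sigma>) x)) = shiftZ k (morphZ \<sigma> x)"
    for k x
    by (simp add: morphZ_subdiv_letter_shiftZ morphZ_subdiv_letter_subdiv[OF non_erasing])
  show ?thesis
    unfolding image_subshift_eq_block_shifts[OF non_erasing subshift] image_subshift_subdiv_eq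
  proof (intro equalityI subsetI)
    fix y
    assume "y \<in> morphZ (subdiv_letter \<sigma>) ` {shiftZ k (morphZ (subdiv \<sigma>) x) |x k.
      x \<in> X \<and> 0 \<le> k \<and> k < int (length (\<sigma> (x 1)))}"
    then obtain x k where "x \<in> X" "0 \<le> k" "k < int (length (\<sigma> (x 1)))"
      "y = shiftZ k (morphZ \<sigma> x)"
      using A by blast
    then show "y \<in> block_shifts \<sigma> X"
      unfolding block_shifts_def by blast
  next
    fix y
    assume "y \<in> block_shifts \<sigma> X"
    then obtain x k where "x \<in> X" "0 \<le> k" "k < int (length (\<sigma> (x 1)))"
      "y = shiftZ k (morphZ \<sigma> x)"
      by (rule block_shiftsE)
    then show "y \<in> morphZ (subdiv_letter \<sigma>) ` {shiftZ k (morphZ (subdiv \<sigma>) x) |x k.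
      x \<in> X \<and> 0 \<le> k \<and> k < int (length (\<sigma> (x 1)))}"
      by (intro image_eqI[of y _ "shiftZ k (morphZ (subdiv \<sigma>) x)"]) (simp add: A, blast)
  qed
qed

lemma subshift_iso_subdiv_letter_iff_inj_on:
  "subshift_iso (image_subshift (subdiv \<sigma>) X) (image_subshift \<sigma> X) (morphZ (subdiv_letter \<sigma>))
    \<longleftrightarrow> inj_on (morphZ (subdiv_letter \<sigma>)) (image_subshift (subdiv \<sigma>) X)"
proof -
  let ?P = "image_subshift (subdiv \<sigma>) X"
  have "homeomorphic_map (subtopology fullshift_top ?P) (subtopology fullshift_top (image_subshift \<sigma> X))
      (morphZ (subdiv_letter \<sigma>)) \<longleftrightarrow> inj_on (morphZ (subdiv_letter \<sigma>)) ?P"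
  proof
    assume "inj_on (morphZ (subdiv_letter \<sigma>)) ?P"
    moreover have "compact_space (subtopology fullshift_top ?P)"
      using compactin_image_subshift[OF non_erasing_subdiv[OF non_erasing] subshift]
      by (rule compact_space_subtopology)
    moreover have "continuous_map (subtopology fullshift_top ?P) fullshift_top (morphZ (subdiv_letter \<sigma>))"
      by (rule continuous_map_from_subtopology[OF continuous_map_morphZ[OF non_erasing_subdiv_letter]])
    then have "continuous_map (subtopology fullshift_top ?P)
        (subtopology fullshift_top (image_subshift \<sigma> X)) (morphZ (subdiv_letter \<sigma>))"
      using image_subdiv_letter_image_subshift
      by (simp add: continuous_map_in_subtopology flip: image_subset_iff_funcset)
    ultimately show "homeomorphic_map (subtopology fullshift_top ?P)
        (subtopology fullshift_top (image_subshift \<sigma> X)) (morphZ (subdiv_letter \<sigma>))"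
      using image_subdiv_letter_image_subshift
      by (intro continuous_imp_homeomorphic_map Hausdorff_space_subtopology Hausdorff_space_fullshift)
        simp_all
  qed (auto dest: homeomorphic_imp_injective_map)
  then show ?thesis
    by (simp add: subshift_iso_def morphZ_subdiv_letter_shiftZ)
qed

end

theorem proposition3p8:
  fixes \<sigma> :: "'a::finite \<Rightarrow> 'b::finite list"
    and X :: "(int \<Rightarrow> 'a) set"
  assumes "non_erasing \<sigma>"
    and "subshift X"
  shows "(recognizable \<sigma> X
           \<longleftrightarrow> subshift_iso (image_subshift (subdiv \<sigma>) X) (image_subshift \<sigma> X)
                 (morphZ (subdiv_letter \<sigma>)))
       \<and> (recognizable \<sigma> X
           \<longleftrightarrow> orbit_injective (subdiv_letter \<sigma>) (image_subshift (subdiv \<sigma>) X)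
               \<and> period_preserving (subdiv_letter \<sigma>) (image_subshift (subdiv \<sigma>) X))
       \<and> (recognizable \<sigma> X
           \<longleftrightarrow> orbit_injective \<sigma> X \<and> period_preserving \<sigma> X)"
proof -
  let ?P = "image_subshift (subdiv \<sigma>) X"
  have "subshift ?P"
    using assms(2) subshift_image_subshift by (auto simp: subshift_def)
  moreover have "compactin fullshift_top ?P"
    using non_erasing_subdiv[OF assms(1)] assms(2) by (rule compactin_image_subshift)
  ultimately have "recognizable (subdiv_letter \<sigma>) ?P
      \<longleftrightarrow> orbit_injective (subdiv_letter \<sigma>) ?P \<and> period_preserving (subdiv_letter \<sigma>) ?P"
    by (rule recognizable_iff_orbit_injective_period_preserving[OF non_erasing_subdiv_letter])
  moreover have "recognizable (subdiv_letter \<sigma>) ?P \<longleftrightarrow> inj_on (morphZ (subdiv_letter \<sigma>)) ?P"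
    by (rule letter_to_letter_recognizable_iff_inj_on) simp
  moreover have "recognizable \<sigma> X \<longleftrightarrow> orbit_injective \<sigma> X \<and> period_preserving \<sigma> X"
    using assms compactin_subshift by (intro recognizable_iff_orbit_injective_period_preserving)
  ultimately show ?thesis
    using recognizable_iff_inj_on_subdiv_letter[OF assms] subshift_iso_subdiv_letter_iff_inj_on[OF assms]
    by simp
qed

end
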